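(* Let $w\in F$ and suppose $w=a_1a_2\cdots a_k$ with $k\ge1$, where for each $i$ either $a_i$ or $a_i^{-1}$ belongs to $\{x_0,x_1,x_2,\dots\}$, and suppose that for each $i<k$, if $a_i=x_r^{\pm1}$ then $a_{i+1}=x_{r+1}^{\pm1}$ or $a_{i+1}=x_{r-1}^{\pm1}$. Then $w\neq 1$ in $F$.
   Context: $F$ is Thompson's group with infinite presentation $\langle x_k,\ k\ge0 \mid x_i^{-1}x_jx_i=x_{j+1}\text{ for } i<j\rangle$. *)

theory Defs
  imports Main
begin

text \<open>Thompson's group F given by the infinite presentation
  < x_k (k >= 0) | x_i^-1 x_j x_i = x_(j+1) for i < j >.
  A letter is a pair (r, s): (r, True) stands for x_r and (r, False) for x_r^-1.
  Elements of F are words modulo the congruence generated by free cancellation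
  and the defining relations.\<close>

type_synonym letter = "nat \<times> bool"
type_synonym word = "letter list"

inductive F_eq :: "word \<Rightarrow> word \<Rightarrow> bool" where
  cancel: "F_eq [(n, b), (n, \<not> b)] []"
| rel: "i < j \<Longrightarrow> F_eq [(i, False), (j, True), (i, True)] [(Suc j, True)]"
| refl: "F_eq u u"
| sym: "F_eq u v \<Longrightarrow> F_eq v u"
| trans: "F_eq u v \<Longrightarrow> F_eq v w \<Longrightarrow> F_eq u w"
| ctx: "F_eq u v \<Longrightarrow> F_eq (p @ u @ q) (p @ v @ q)"

definition F_trivial :: "word \<Rightarrow> bool" where
  "F_trivial w \<longleftrightarrow> F_eq w []"

end

theory Submission
  imports Defs
begin

text \<open>Let \<open>m\<close> be the least index occurring in \<open>w\<close>. F acts on infinite binary sequences,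
  and on the sequences \<open>1\<^sup>m 0\<^sup>K 1 0 0 \<dots>\<close> with \<open>K\<close> large a word acts by shifting the last \<open>1\<close>
  by the exponent sum of \<open>x\<^sub>m\<close>; so if this sum is nonzero then \<open>w \<noteq> 1\<close>. Otherwise
  conjugate \<open>w\<close> by \<open>x\<^sub>m\<^sup>s\<close> with \<open>s = length w\<close>: the relations
  \<open>x\<^sub>m\<^sup>-\<^sup>1 x\<^sub>n\<^sup>\<plusminus>\<^sup>1 = x\<^bsub>n+1\<^esub>\<^sup>\<plusminus>\<^sup>1 x\<^sub>m\<^sup>-\<^sup>1\<close> (\<open>n > m\<close>) delete every letter
  \<open>x\<^sub>m\<^sup>\<plusminus>\<^sup>1\<close> and raise the other indices by amounts that change by one exactly
  across a deleted letter. Since the neighbours of a deleted \<open>x\<^sub>m\<^sup>\<plusminus>\<^sup>1\<close> are both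
  \<open>x\<^bsub>m+1\<^esub>\<^sup>\<plusminus>\<^sup>1\<close>, the conjugate again has adjacent consecutive indices; it is nonempty,
  shorter than \<open>w\<close>, and trivial if \<open>w\<close> is, so induction on the length applies.\<close>

lemmas F_eq_trans [trans] = F_eq.trans

lemma F_eq_append_left: "F_eq u v \<Longrightarrow> F_eq (p @ u) (p @ v)"
  using F_eq.ctx[of u v p "[]"] by simp

lemma F_eq_append_right: "F_eq u v \<Longrightarrow> F_eq (u @ q) (v @ q)"
  using F_eq.ctx[of u v "[]" q] by simp

definition word_inv :: "word \<Rightarrow> word" where
  "word_inv w = rev (map (\<lambda>(n, b). (n, \<not> b)) w)"

lemma word_inv_Nil [simp]: "word_inv [] = []"
  by (simp add: word_inv_def)

lemma word_inv_Cons [simp]: "word_inv ((n, b) # w) = word_inv w @ [(n, \<not> b)]"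
  by (simp add: word_inv_def)

lemma word_inv_word_inv [simp]: "word_inv (word_inv w) = w"
  by (induction w) (auto simp: word_inv_def rev_map comp_def split: prod.splits)

lemma F_eq_append_word_inv: "F_eq (w @ word_inv w) []"
proof (induction w)
  case Nil
  then show ?case by (simp add: F_eq.refl)
next
  case (Cons x w)
  obtain n b where x: "x = (n, b)" by fastforce
  have "F_eq ((x # w) @ word_inv (x # w)) ([x] @ [] @ [(n, \<not> b)])"
    using F_eq.ctx[OF Cons.IH, of "[x]" "[(n, \<not> b)]"] x by simp
  also have "F_eq \<dots> []"
    using F_eq.cancel x by simp
  finally show ?case .
qed

lemma F_eq_word_inv_append: "F_eq (word_inv w @ w) []"
  using F_eq_append_word_inv[of "word_inv w"] by simp

lemma F_eq_word_inv: "F_eq u v \<Longrightarrow> F_eq (word_inv u) (word_inv v)"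
proof -
  assume "F_eq u v"
  have "F_eq (word_inv u) (word_inv u @ v @ word_inv v)"
    using F_eq_append_left[OF F_eq_append_word_inv[of v], of "word_inv u"]
    by (simp add: F_eq.sym)
  also have "F_eq \<dots> ((word_inv u @ u) @ word_inv v)"
    using F_eq.ctx[OF F_eq.sym[OF \<open>F_eq u v\<close>], of "word_inv u" "word_inv v"] by simp
  also have "F_eq \<dots> (word_inv v)"
    using F_eq_append_right[OF F_eq_word_inv_append[of u], of "word_inv v"] by simp
  finally show ?thesis .
qed

lemma F_eq_conj_trivial:
  assumes conj: "F_eq (p @ u) (v @ p)" and "F_eq u []"
  shows "F_eq v []"
proof -
  have "F_eq v ((v @ p) @ word_inv p)"
    using F_eq_append_left[OF F_eq_append_word_inv[of p], of v] by (simp add: F_eq.sym)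
  also have "F_eq \<dots> ((p @ u) @ word_inv p)"
    by (rule F_eq_append_right[OF F_eq.sym[OF conj]])
  also have "F_eq \<dots> (p @ word_inv p)"
    using F_eq.ctx[OF \<open>F_eq u []\<close>, of p "word_inv p"] by simp
  also have "F_eq \<dots> []"
    by (rule F_eq_append_word_inv)
  finally show ?thesis .
qed

lemma F_eq_neg_commute:
  assumes "m < n"
  shows "F_eq [(m, False), (n, b)] [(Suc n, b), (m, False)]"
proof -
  have rel: "F_eq [(m, False), (n, b), (m, True)] [(Suc n, b)]"
  proof (cases b)
    case False
    then show ?thesis
      using F_eq_word_inv[OF F_eq.rel[OF assms]] by simp
  qed (use F_eq.rel[OF assms] in simp)
  have "F_eq [(m, False), (n, b)] ([(m, False), (n, b)] @ [(m, True), (m, False)])"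
    using F_eq_append_left[OF F_eq.cancel[of m True], of "[(m, False), (n, b)]"]
    by (simp add: F_eq.sym)
  also have "F_eq \<dots> ([(Suc n, b)] @ [(m, False)])"
    using F_eq_append_right[OF rel, of "[(m, False)]"] by simp
  finally show ?thesis by simp
qed

lemma F_eq_neg_power_commute:
  assumes "m < n"
  shows "F_eq (replicate s (m, False) @ [(n, b)]) ((n + s, b) # replicate s (m, False))"
proof (induction s)
  case 0
  then show ?case by (simp add: F_eq.refl)
next
  case (Suc s)
  have "F_eq (replicate (Suc s) (m, False) @ [(n, b)])
             ([(m, False), (n + s, b)] @ replicate s (m, False))"
    using F_eq_append_left[OF Suc.IH, of "[(m, False)]"] by simp
  also have "F_eq \<dots> ([(Suc (n + s), b), (m, False)] @ replicate s (m, False))"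
    using assms by (intro F_eq_append_right F_eq_neg_commute) simp
  finally show ?case by simp
qed

fun exp_sum :: "nat \<Rightarrow> word \<Rightarrow> int" where
  "exp_sum m [] = 0"
| "exp_sum m (x # w) = (if fst x = m then if snd x then 1 else -1 else 0) + exp_sum m w"

text \<open>Pushing \<open>x\<^sub>m\<^sup>-\<^sup>s\<close> rightwards through a word whose indices are all \<open>\<ge> m\<close>:
  a letter \<open>x\<^sub>m\<^sup>\<plusminus>\<^sup>1\<close> is absorbed into the power, any other letter passes through it
  with its index raised by the current exponent.\<close>
fun shift_out :: "nat \<Rightarrow> nat \<Rightarrow> word \<Rightarrow> word" where
  "shift_out m s [] = []"
| "shift_out m s (x # w) =
    (if fst x = m then shift_out m (if snd x then s - 1 else Suc s) w
     else (fst x + s, snd x) # shift_out m s w)"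

lemma F_eq_neg_power_shift_out:
  assumes "\<forall>x\<in>set w. m \<le> fst x" and "length w \<le> s"
  shows "F_eq (replicate s (m, False) @ w)
              (shift_out m s w @ replicate (nat (int s - exp_sum m w)) (m, False))"
  using assms
proof (induction w arbitrary: s)
  case Nil
  then show ?case by (simp add: F_eq.refl)
next
  case (Cons x w)
  obtain n b where x: "x = (n, b)" by fastforce
  consider "n \<noteq> m" | "n = m" "b" | "n = m" "\<not> b" by blast
  then show ?case
  proof cases
    case 1
    then have "m < n" using Cons.prems x by fastforce
    have "F_eq (replicate s (m, False) @ x # w) ((replicate s (m, False) @ [(n, b)]) @ w)"
      using x by (simp add: F_eq.refl)
    also have "F_eq \<dots> ([(n + s, b)] @ replicate s (m, False) @ w)"
      using F_eq_append_right[OF F_eq_neg_power_commute[OF \<open>m < n\<close>]] by simp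
    also have "F_eq \<dots>
        ([(n + s, b)] @ shift_out m s w @ replicate (nat (int s - exp_sum m w)) (m, False))"
      using Cons by (intro F_eq_append_left) simp
    finally show ?thesis using 1 x by simp
  next
    case 2
    then obtain s' where s: "s = Suc s'" using Cons.prems by (cases s) auto
    have "F_eq (replicate s (m, False) @ x # w)
               (replicate s' (m, False) @ [(m, False), (m, \<not> False)] @ w)"
      using s x 2 by (simp add: F_eq.refl replicate_app_Cons_same)
    also have "F_eq \<dots> (replicate s' (m, False) @ [] @ w)"
      by (rule F_eq.ctx[OF F_eq.cancel])
    also have "F_eq \<dots> (shift_out m s' w @ replicate (nat (int s' - exp_sum m w)) (m, False))"
      using Cons s by simp
    finally show ?thesis using s x 2 by (simp add: algebra_simps)
  next
    case 3
    have "F_eq (replicate s (m, False) @ x # w) (replicate (Suc s) (m, False) @ w)"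
      using x 3 by (simp add: F_eq.refl replicate_app_Cons_same)
    also have "F_eq \<dots>
        (shift_out m (Suc s) w @ replicate (nat (int (Suc s) - exp_sum m w)) (m, False))"
      by (rule Cons.IH) (use Cons.prems in auto)
    finally show ?thesis using x 3 by (simp add: algebra_simps)
  qed
qed

text \<open>F acts on the Cantor space of infinite binary sequences: \<open>x\<^sub>0\<close> maps
  \<open>1\<alpha> \<mapsto> 11\<alpha>\<close>, \<open>01\<alpha> \<mapsto> 10\<alpha>\<close>, \<open>00\<alpha> \<mapsto> 0\<alpha>\<close>, and \<open>x\<^sub>n\<close> acts as \<open>x\<^sub>0\<close> on the tail of
  the sequences starting with \<open>1\<^sup>n\<close>, fixing all others.\<close>

definition scons :: "bool \<Rightarrow> (nat \<Rightarrow> bool) \<Rightarrow> nat \<Rightarrow> bool" where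
  "scons b f = case_nat b f"

lemma scons_0 [simp]: "scons b f 0 = b"
  by (simp add: scons_def)

lemma scons_Suc [simp]: "scons b f (Suc n) = f n"
  by (simp add: scons_def)

lemma scons_comp_Suc [simp]: "scons b f \<circ> Suc = f"
  by (auto simp: fun_eq_iff)

lemma scons_eta: "f 0 = b \<Longrightarrow> scons b (f \<circ> Suc) = f"
  by (auto simp: fun_eq_iff scons_def split: nat.split)

definition x0_map :: "(nat \<Rightarrow> bool) \<Rightarrow> nat \<Rightarrow> bool" where
  "x0_map f =
    (if f 0 then scons True (scons True (f \<circ> Suc))
     else if f 1 then scons True (scons False (f \<circ> Suc \<circ> Suc))
     else scons False (f \<circ> Suc \<circ> Suc))"

definition x0_inv_map :: "(nat \<Rightarrow> bool) \<Rightarrow> nat \<Rightarrow> bool" where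
  "x0_inv_map f =
    (if \<not> f 0 then scons False (scons False (f \<circ> Suc))
     else if \<not> f 1 then scons False (scons True (f \<circ> Suc \<circ> Suc))
     else scons True (f \<circ> Suc \<circ> Suc))"

lemma x0_inv_map_x0_map [simp]: "x0_inv_map (x0_map f) = f"
  by (auto simp: x0_map_def x0_inv_map_def fun_eq_iff scons_def split: nat.split)

lemma x0_map_x0_inv_map [simp]: "x0_map (x0_inv_map f) = f"
  by (auto simp: x0_map_def x0_inv_map_def fun_eq_iff scons_def split: nat.split)

fun lift :: "nat \<Rightarrow> ((nat \<Rightarrow> bool) \<Rightarrow> nat \<Rightarrow> bool) \<Rightarrow> (nat \<Rightarrow> bool) \<Rightarrow> nat \<Rightarrow> bool" where
  "lift 0 h f = h f"
| "lift (Suc n) h f = (if f 0 then scons True (lift n h (f \<circ> Suc)) else f)"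

lemma lift_lift: "lift n h (lift n h' f) = lift n (h \<circ> h') f"
  by (induction n arbitrary: f) auto

lemma lift_id: "lift n id f = f"
  by (induction n arbitrary: f) (auto simp: scons_eta)

lemma lift_add: "lift (i + k) h = lift i (lift k h)"
  by (induction i) auto

lemma x0_conj_lift: "x0_map (lift (Suc k) h (x0_inv_map f)) = lift (Suc (Suc k)) h f"
  by (auto simp: x0_map_def x0_inv_map_def scons_eta)

definition letter_map :: "letter \<Rightarrow> (nat \<Rightarrow> bool) \<Rightarrow> nat \<Rightarrow> bool" where
  "letter_map x = lift (fst x) (if snd x then x0_map else x0_inv_map)"

definition act :: "word \<Rightarrow> (nat \<Rightarrow> bool) \<Rightarrow> nat \<Rightarrow> bool" where
  "act w = fold letter_map w"

lemma act_append: "act (u @ v) = act v \<circ> act u"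
  by (simp add: act_def)

lemma act_F_eq: "F_eq u v \<Longrightarrow> act u = act v"
proof (induction rule: F_eq.induct)
  case (cancel n b)
  have inverse: "x0_inv_map \<circ> x0_map = id" "x0_map \<circ> x0_inv_map = id"
    by (simp_all add: fun_eq_iff)
  show ?case
    by (cases b) (simp_all add: act_def letter_map_def lift_lift lift_id inverse fun_eq_iff)
next
  case (rel i j)
  then obtain k where j: "j = i + Suc k"
    using less_iff_Suc_add by auto
  have lift_j: "lift j h = lift i (lift (Suc k) h)"
    and lift_Suc_j: "lift (Suc j) h = lift i (lift (Suc (Suc k)) h)" for h
    using lift_add[of i "Suc k" h] lift_add[of i "Suc (Suc k)" h] by (simp_all add: j)
  have "act [(i, False), (j, True), (i, True)] f = act [(Suc j, True)] f" for f
  proof -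
    have "act [(i, False), (j, True), (i, True)] f
        = lift i x0_map (lift i (lift (Suc k) x0_map) (lift i x0_inv_map f))"
      by (simp add: act_def letter_map_def lift_j del: lift.simps)
    also have "\<dots> = lift i (x0_map \<circ> lift (Suc k) x0_map \<circ> x0_inv_map) f"
      by (simp add: lift_lift comp_assoc)
    also have "\<dots> = lift i (lift (Suc (Suc k)) x0_map) f"
      by (simp add: comp_def x0_conj_lift del: lift.simps)
    also have "\<dots> = act [(Suc j, True)] f"
      by (simp add: act_def letter_map_def lift_Suc_j del: lift.simps)
    finally show ?thesis .
  qed
  then show ?case by blast
next
  case (ctx u v p q)
  then show ?case by (simp add: act_append)
qed auto

fun prefix_ones :: "nat \<Rightarrow> (nat \<Rightarrow> bool) \<Rightarrow> nat \<Rightarrow> bool" where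
  "prefix_ones 0 f = f"
| "prefix_ones (Suc n) f = scons True (prefix_ones n f)"

lemma prefix_ones_add: "prefix_ones m f (m + k) = f k"
  by (induction m) auto

lemma lift_prefix_ones: "lift n h (prefix_ones n f) = prefix_ones n (h f)"
  by (induction n) auto

lemma lift_prefix_ones_less:
  "m < n \<Longrightarrow> \<not> f 0 \<Longrightarrow> lift n h (prefix_ones m f) = prefix_ones m f"
proof (induction m arbitrary: n)
  case 0
  then show ?case by (cases n) auto
next
  case (Suc m)
  then show ?case by (cases n) auto
qed

definition point :: "nat \<Rightarrow> nat \<Rightarrow> nat \<Rightarrow> bool" where
  "point m K = prefix_ones m (\<lambda>k. k = K)"

lemma x0_map_indicator: "x0_map (\<lambda>k. k = Suc (Suc K)) = (\<lambda>k. k = Suc K)"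
  by (auto simp: x0_map_def fun_eq_iff scons_def split: nat.split)

lemma x0_inv_map_indicator: "x0_inv_map (\<lambda>k. k = Suc K) = (\<lambda>k. k = Suc (Suc K))"
  by (auto simp: x0_inv_map_def fun_eq_iff scons_def split: nat.split)

lemma letter_map_point:
  assumes "m \<le> fst x" and "2 \<le> K"
  shows "letter_map x (point m K) = point m (nat (int K - exp_sum m [x]))"
proof -
  obtain K' where K: "K = Suc (Suc K')"
    using assms(2) by (metis add_2_eq_Suc le_Suc_ex)
  show ?thesis
  proof (cases "fst x = m")
    case True
    then have "nat (int K - exp_sum m [x]) = (if snd x then Suc K' else Suc (Suc (Suc K')))"
      by (simp add: K nat_eq_iff)
    then show ?thesis
      using True x0_map_indicator[of K'] x0_inv_map_indicator[of "Suc K'"]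
      by (simp add: letter_map_def point_def lift_prefix_ones K)
  next
    case False
    then have "nat (int K - exp_sum m [x]) = K"
      by simp
    with False show ?thesis
      using assms(1) by (simp add: letter_map_def point_def lift_prefix_ones_less K)
  qed
qed

lemma act_point:
  "\<forall>x\<in>set w. m \<le> fst x \<Longrightarrow> length w + 2 \<le> K \<Longrightarrow>
    act w (point m K) = point m (nat (int K - exp_sum m w))"
proof (induction w arbitrary: K)
  case Nil
  then show ?case by (simp add: act_def)
next
  case (Cons x w)
  define K' where "K' = nat (int K - exp_sum m [x])"
  have bound: "\<bar>exp_sum m [x]\<bar> \<le> 1" and K: "length w + 3 \<le> K"
    using Cons.prems(2) by simp_all
  then have K': "int K' = int K - exp_sum m [x]"
    unfolding K'_def by linarith
  then have "length w + 2 \<le> K'"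
    using bound K by linarith
  have exp_sum_w: "int K' - exp_sum m w = int K - exp_sum m (x # w)"
    by (simp add: K' algebra_simps)
  have "act (x # w) (point m K) = act w (letter_map x (point m K))"
    by (simp add: act_def)
  also have "\<dots> = act w (point m K')"
    using Cons.prems by (simp add: letter_map_point K'_def)
  also have "\<dots> = point m (nat (int K' - exp_sum m w))"
    using Cons.prems \<open>length w + 2 \<le> K'\<close> by (intro Cons.IH) auto
  also have "\<dots> = point m (nat (int K - exp_sum m (x # w)))"
    by (simp only: exp_sum_w)
  finally show ?case .
qed

lemma exp_sum_nonzero_imp_nontrivial:
  assumes "\<forall>x\<in>set w. m \<le> fst x" and "exp_sum m w \<noteq> 0"
  shows "\<not> F_eq w []"
proof
  define K where "K = length w + 2"
  assume "F_eq w []"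
  then have "act w = act []"
    by (rule act_F_eq)
  then have "point m K = point m (nat (int K - exp_sum m w))"
    using act_point[OF assms(1), of K] by (simp add: act_def K_def)
  then have "point m K (m + K) = point m (nat (int K - exp_sum m w)) (m + K)"
    by simp
  then have "nat (int K - exp_sum m w) = K"
    unfolding point_def prefix_ones_add by simp
  then show False
    using assms(2) K_def by linarith
qed

definition adjacent :: "letter \<Rightarrow> letter \<Rightarrow> bool" where
  "adjacent x y \<longleftrightarrow> fst y = fst x + 1 \<or> fst y + 1 = fst x"

lemma length_shift_out: "length (shift_out m s w) = length (filter (\<lambda>x. fst x \<noteq> m) w)"
  by (induction w arbitrary: s) auto

lemma adjacent_across_min:
  assumes "adjacent x y" "adjacent y z" "fst y = m" "m \<le> fst x" "m \<le> fst z" "0 < s"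
  shows "adjacent (fst x + s, snd x) (fst z + (if snd y then s - 1 else Suc s), snd z)"
proof -
  have "fst x = Suc m" "fst z = Suc m"
    using assms(1-5) by (auto simp: adjacent_def)
  then show ?thesis
    using \<open>0 < s\<close> by (auto simp: adjacent_def)
qed

lemma successively_adjacent_shift_out:
  "successively adjacent w \<Longrightarrow> \<forall>x\<in>set w. m \<le> fst x \<Longrightarrow> length w \<le> s \<Longrightarrow>
    successively adjacent (shift_out m s w)"
proof (induction w arbitrary: s rule: induct_list012)
  case (3 x y zs)
  have xy: "adjacent x y" and y_zs: "successively adjacent (y # zs)"
    using "3.prems"(1) by simp_all
  have IH_y_zs: "successively adjacent (shift_out m t (y # zs))" if "length zs < t" for t
    using "3.IH"(2)[OF y_zs] "3.prems"(2) that by simp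
  consider "fst x = m" | "fst x \<noteq> m" "fst y \<noteq> m" | "fst x \<noteq> m" "fst y = m" by blast
  then show ?case
  proof cases
    case 1
    let ?t = "if snd x then s - 1 else Suc s"
    have "shift_out m s (x # y # zs) = shift_out m ?t (y # zs)"
      using 1 by (simp only: shift_out.simps(2)[of m s x "y # zs"] if_True simp_thms)
    moreover have "length zs < ?t"
      using "3.prems"(3) by auto
    then have "successively adjacent (shift_out m ?t (y # zs))"
      by (rule IH_y_zs)
    ultimately show ?thesis
      by (simp only:)
  next
    case 2
    then show ?thesis
      using "3.prems"(3) IH_y_zs[of s] xy by (simp add: successively_Cons adjacent_def)
  next
    case 3
    show ?thesis
    proof (cases zs)
      case (Cons z r)
      define s' where "s' = (if snd y then s - 1 else Suc s)"
      have "adjacent y z" "successively adjacent zs"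
        using y_zs Cons by simp_all
      moreover have "length zs \<le> s'"
        using "3.prems"(3) by (auto simp: s'_def)
      ultimately have "successively adjacent (shift_out m s' zs)"
        using "3.IH"(1) "3.prems"(2) by simp
      moreover have "adjacent (fst x + s, snd x) (fst z + s', snd z)"
        unfolding s'_def using xy \<open>adjacent y z\<close> 3 "3.prems"(2,3) Cons
        by (intro adjacent_across_min) auto
      moreover have "fst z \<noteq> m"
        using \<open>adjacent y z\<close> 3 by (auto simp: adjacent_def)
      ultimately show ?thesis
        using 3 Cons by (simp add: successively_Cons s'_def)
    qed (use 3 in simp)
  qed
qed simp_all

lemma successively_adjacent_nontrivial:
  "successively adjacent w \<Longrightarrow> w \<noteq> [] \<Longrightarrow> \<not> F_eq w []"
proof (induction "length w" arbitrary: w rule: less_induct)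
  case less
  define m where "m = Min (fst ` set w)"
  have ge: "\<forall>x\<in>set w. m \<le> fst x" and m_in: "m \<in> fst ` set w"
    using less.prems(2) by (simp_all add: m_def)
  show ?case
  proof
    assume trivial: "F_eq w []"
    then have exp0: "exp_sum m w = 0"
      using exp_sum_nonzero_imp_nontrivial[OF ge] by blast
    define s where "s = length w"
    have "F_eq (replicate s (m, False) @ w) (shift_out m s w @ replicate s (m, False))"
      using F_eq_neg_power_shift_out[OF ge, of s] exp0 by (simp add: s_def)
    then have "F_eq (shift_out m s w) []"
      using trivial by (rule F_eq_conj_trivial)
    moreover have "length (shift_out m s w) < length w"
    proof -
      obtain z where "z \<in> set w" "fst z = m"
        using m_in by blast
      then have "length (filter (\<lambda>x. fst x \<noteq> m) w) < length w"
        by (intro length_filter_less) auto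
      then show ?thesis
        by (simp only: length_shift_out)
    qed
    moreover have "successively adjacent (shift_out m s w)"
      using successively_adjacent_shift_out[OF less.prems(1) ge] by (simp add: s_def)
    moreover have "\<exists>x\<in>set w. fst x \<noteq> m"
    proof -
      consider x where "w = [x]" | x y r where "w = x # y # r"
        using less.prems(2) by (metis list.exhaust)
      then show ?thesis
      proof cases
        case 1
        then show ?thesis using exp0 by (auto split: if_splits)
      next
        case 2
        then have "adjacent x y"
          using less.prems(1) by simp
        then have "fst x \<noteq> fst y"
          by (auto simp: adjacent_def)
        then show ?thesis
          using 2 by (cases "fst x = m") auto
      qed
    qed
    then have "filter (\<lambda>x. fst x \<noteq> m) w \<noteq> []"
      by (simp add: filter_empty_conv)
    then have "shift_out m s w \<noteq> []"
      using length_shift_out[of m s w] by auto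
    ultimately show False
      using less.hyps by blast
  qed
qed

theorem lemma3p3:
  fixes a :: word
  assumes "length a \<ge> 1"
    and "\<And>i. Suc i < length a \<Longrightarrow>
           fst (a ! Suc i) = fst (a ! i) + 1 \<or> fst (a ! Suc i) + 1 = fst (a ! i)"
  shows "\<not> F_trivial a"
proof -
  have "successively adjacent a"
    using assms(2) by (simp add: successively_conv_nth adjacent_def)
  moreover have "a \<noteq> []"
    using assms(1) by auto
  ultimately show ?thesis
    unfolding F_trivial_def by (rule successively_adjacent_nontrivial)
qed

end
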